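(* Let $Z\subset\mathbb{S}_2$ be a finite nonempty set of points. Then the following are equivalent: (i) $Z\subset\widetilde{L_{12}}\cap(E_1\cup E_2)$; (ii) $\alpha(Z)=\alpha(2Z)=\alpha(3Z)=\alpha(4Z)=\alpha(5Z)=1$.
   Context: Let $P_1,P_2\in\mathbb{P}^2(\mathbb{C})$ be two general (distinct) points and $f\colon\mathbb{S}_2\to\mathbb{P}^2$ the blow-up at them, with exceptional curves $E_i=f^{-1}(P_i)$; let $H$ be the pullback of the class of a line and $\mathbb{L}_2=3H-E_1-E_2=-K_{\mathbb{S}_2}$. $L_{12}$ is the line through $P_1,P_2$ and $\widetilde{L_{12}}$ its proper transform in $\mathbb{S}_2$. For a finite set $Z\subset\mathbb{S}_2$ with ideal sheaf $\mathcal{I}_Z$ and a positive integer $m$, $\alpha(mZ)=\min\{d\ge 0:\ H^0(\mathbb{S}_2,d\mathbb{L}_2\otimes\mathcal{I}_Z^{(m)})\neq 0\}$, i.e. the least $d$ such that some effective divisor $D\in|d\mathbb{L}_2|$ has multiplicity at least $m$ at every point of $Z$. *)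

theory Defs
  imports Complex_Main
begin

(* Coordinates: P1 = [1:0:0], P2 = [0:1:0]; L12 = {z = 0}.
   A homogeneous polynomial in x,y,z is given by its coefficient function
   c (i,j,k) = coefficient of x^i y^j z^k. *)

type_synonym poly3 = "nat \<times> nat \<times> nat \<Rightarrow> complex"

(* i-th power's a-th derivative factor: d^a/dx^a x^i = df i a * x^(i-a) *)
definition df :: "nat \<Rightarrow> nat \<Rightarrow> complex" where
  "df i a = (if a \<le> i then of_nat (fact i) / of_nat (fact (i - a)) else 0)"

definition monoms :: "nat \<Rightarrow> (nat \<times> nat \<times> nat) set" where
  "monoms n = {(i,j,k). i + j + k = n}"

definition homog :: "poly3 \<Rightarrow> nat \<Rightarrow> bool" where
  "homog c n \<longleftrightarrow> (\<forall>i j k. c (i,j,k) \<noteq> 0 \<longrightarrow> i + j + k = n)"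

(* multiplicity of the plane curve {F = 0} at the point [x0:y0:z0] is >= m:
   all partial derivatives of order < m vanish there *)
definition hmult_ge :: "poly3 \<Rightarrow> nat \<Rightarrow> complex \<times> complex \<times> complex \<Rightarrow> nat \<Rightarrow> bool" where
  "hmult_ge c n p m \<longleftrightarrow> (case p of (x0, y0, z0) \<Rightarrow>
     (\<forall>a b e. a + b + e < m \<longrightarrow>
        (\<Sum>(i,j,k)\<in>monoms n. c (i,j,k) * df i a * df j b * df k e
             * x0 ^ (i - a) * y0 ^ (j - b) * z0 ^ (k - e)) = 0))"

(* multiplicity >= m at (0,t0) of the bivariate polynomial
   g(s,t) = sum over (i,j,k) in S of c(i,j,k) * s^(fst (E(i,j,k))) * t^(snd (E(i,j,k))) *)
definition bmult_ge :: "poly3 \<Rightarrow> (nat \<times> nat \<times> nat) set \<Rightarrow> (nat \<times> nat \<times> nat \<Rightarrow> nat \<times> nat)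
     \<Rightarrow> complex \<Rightarrow> nat \<Rightarrow> bool" where
  "bmult_ge c S E t0 m \<longleftrightarrow>
     (\<forall>\<alpha> \<beta>. \<alpha> + \<beta> < m \<longrightarrow>
        (\<Sum>q\<in>S. c q * df (fst (E q)) \<alpha> * df (snd (E q)) \<beta>
             * (0::complex) ^ (fst (E q) - \<alpha>) * t0 ^ (snd (E q) - \<beta>)) = 0)"

(* Points of S_2 (blow-up of P^2 at P1=[1:0:0], P2=[0:1:0]):
   Pl x y z : the point [x:y:z] of P^2 \ {P1,P2};
   Ex1 a b  : the point of E1 = tangent direction [a:b] at P1 in the affine
              coordinates (u,v) = (y/x, z/x);
   Ex2 a b  : the point of E2 = tangent direction [a:b] at P2 in the affine
              coordinates (u,v) = (x/y, z/y).
   Representatives are normalised (first nonzero coordinate equals 1). *)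
datatype s2pt = Pl complex complex complex | Ex1 complex complex | Ex2 complex complex

definition norm3 :: "complex \<Rightarrow> complex \<Rightarrow> complex \<Rightarrow> bool" where
  "norm3 x y z \<longleftrightarrow> x = 1 \<or> (x = 0 \<and> y = 1) \<or> (x = 0 \<and> y = 0 \<and> z = 1)"

definition norm2 :: "complex \<Rightarrow> complex \<Rightarrow> bool" where
  "norm2 a b \<longleftrightarrow> a = 1 \<or> (a = 0 \<and> b = 1)"

fun valid_pt :: "s2pt \<Rightarrow> bool" where
  "valid_pt (Pl x y z) \<longleftrightarrow> norm3 x y z \<and> (x, y, z) \<noteq> (1, 0, 0) \<and> (x, y, z) \<noteq> (0, 1, 0)"
| "valid_pt (Ex1 a b) \<longleftrightarrow> norm2 a b"
| "valid_pt (Ex2 a b) \<longleftrightarrow> norm2 a b"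

(* A nonzero section of d*L2 = d(3H - E1 - E2): a nonzero homogeneous polynomial
   of degree 3d with multiplicity >= d at P1 and at P2. *)
definition section_L :: "nat \<Rightarrow> poly3 \<Rightarrow> bool" where
  "section_L d c \<longleftrightarrow> homog c (3 * d) \<and> (\<exists>q. c q \<noteq> 0)
      \<and> hmult_ge c (3 * d) (1, 0, 0) d \<and> hmult_ge c (3 * d) (0, 1, 0) d"

(* Multiplicity >= m at the point p of the effective divisor
   D = f^* {F = 0} - d E1 - d E2 in |d L2|.  Near E1, in the chart u = s, v = s t
   (resp. v = s, u = s t), D has local equation s^(-d) F(1, u, v). *)
fun dmult_ge :: "nat \<Rightarrow> poly3 \<Rightarrow> s2pt \<Rightarrow> nat \<Rightarrow> bool" where
  "dmult_ge d c (Pl x y z) m = hmult_ge c (3 * d) (x, y, z) m"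
| "dmult_ge d c (Ex1 a b) m =
     (let S = {(i,j,k) \<in> monoms (3 * d). d \<le> j + k} in
      if a = 1 then bmult_ge c S (\<lambda>(i,j,k). (j + k - d, k)) b m
      else bmult_ge c S (\<lambda>(i,j,k). (j + k - d, j)) 0 m)"
| "dmult_ge d c (Ex2 a b) m =
     (let S = {(i,j,k) \<in> monoms (3 * d). d \<le> i + k} in
      if a = 1 then bmult_ge c S (\<lambda>(i,j,k). (i + k - d, k)) b m
      else bmult_ge c S (\<lambda>(i,j,k). (i + k - d, i)) 0 m)"

definition alpha :: "nat \<Rightarrow> s2pt set \<Rightarrow> nat" where
  "alpha m Z = (LEAST d. \<exists>c. section_L d c \<and> (\<forall>p\<in>Z. dmult_ge d c p m))"

end

theory Submission
  imports Defs
begin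

(* The divisor 3 L12' + 2 E1 + 2 E2 in |L2|, cut out by z^3, has multiplicity 5 at the two
   points L12' \<inter> E1 and L12' \<inter> E2, while the only divisor in |0 L2| is empty; this gives
   (i) \<Longrightarrow> (ii).  Conversely, alpha(5Z) = 1 provides a cubic through P1 and P2 whose
   divisor in |L2| has multiplicity 5 at every point of Z.  Off the exceptional curves this is
   impossible because a plane cubic has no point of multiplicity > 3; on E1 the Taylor
   coefficients of the local equation force the point to be L12' \<inter> E1; E2 follows by the
   symmetry x \<leftrightarrow> y.  Since alpha is a least element, one also needs some section of some d L2
   with multiplicity 5 along Z: a dimension count among the multiples of z^d provides one. *)

lemma finite_monoms: "finite (monoms n)"
proof (rule finite_subset)
  show "monoms n \<subseteq> {..n} \<times> {..n} \<times> {..n}"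
    by (auto simp: monoms_def)
qed auto

lemma monoms_3:
  "monoms 3 = {(3,0,0), (2,1,0), (2,0,1), (1,2,0), (1,1,1), (1,0,2), (0,3,0), (0,2,1), (0,1,2), (0,0,3)}"
proof -
  have "i + j + k = 3 \<longleftrightarrow> (i, j, k) \<in> {(3,0,0), (2,1,0), (2,0,1), (1,2,0), (1,1,1), (1,0,2), (0,3,0), (0,2,1), (0,1,2), (0,0,3)}"
    for i j k :: nat
    by (cases i; cases j; cases k) (auto simp: numeral_eq_Suc)
  then show ?thesis
    unfolding monoms_def by auto
qed

lemma df_0_right [simp]: "df i 0 = 1"
  and df_0_Suc [simp]: "df 0 (Suc a) = 0"
  and df_Suc_Suc [simp]: "df (Suc i) (Suc a) = of_nat (Suc i) * df i a"
  by (auto simp: df_def fact_Suc Suc_diff_le algebra_simps add_divide_distrib)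

lemma df_numeral [simp]:
  "df (numeral n) (Suc a) = of_nat (numeral n) * df (pred_numeral n) a"
  "df (numeral n) (numeral m) = of_nat (numeral n) * df (pred_numeral n) (pred_numeral m)"
  "df 0 (numeral m) = 0"
  "df (Suc i) (numeral m) = of_nat (Suc i) * df i (pred_numeral m)"
  by (simp_all only: numeral_eq_Suc df_0_right df_0_Suc df_Suc_Suc)

lemma df_eq_0: "i < a \<Longrightarrow> df i a = 0"
  by (simp add: df_def)

lemma df_self: "df i i = of_nat (fact i)"
  by (simp add: df_def)

lemma homog_hmult_ge_above_degree:
  assumes "homog c n" and "hmult_ge c n (x, y, z) m" and "n < m"
  shows "c q = 0"
proof (cases "q \<in> monoms n")
  case True
  obtain a b e where q: "q = (a, b, e)" by (cases q)
  have other_terms: "c (i,j,k) * df i a * df j b * df k e * x ^ (i - a) * y ^ (j - b) * z ^ (k - e) = 0"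
    if "(i, j, k) \<in> monoms n - {q}" for i j k
  proof -
    \<comment> \<open>another monomial of the same degree has some exponent below that of q\<close>
    have "i < a \<or> j < b \<or> k < e" using that True by (auto simp: q monoms_def)
    then show ?thesis by (auto simp: df_eq_0)
  qed
  have "(\<Sum>(i,j,k)\<in>monoms n - {q}. c (i,j,k) * df i a * df j b * df k e
      * x ^ (i - a) * y ^ (j - b) * z ^ (k - e)) = 0"
    by (rule sum.neutral) (use other_terms in fast)
  then have "(\<Sum>(i,j,k)\<in>monoms n. c (i,j,k) * df i a * df j b * df k e
      * x ^ (i - a) * y ^ (j - b) * z ^ (k - e)) = c q * of_nat (fact a * fact b * fact e)"
    by (simp add: sum.remove[OF finite_monoms True] q df_self)
  moreover have "a + b + e < m" using True assms(3) by (simp add: q monoms_def)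
  then have "(\<Sum>(i,j,k)\<in>monoms n. c (i,j,k) * df i a * df j b * df k e
      * x ^ (i - a) * y ^ (j - b) * z ^ (k - e)) = 0"
    using assms(2) by (simp add: hmult_ge_def)
  ultimately show ?thesis by simp
next
  case False
  then show ?thesis
    using assms(1) by (cases q) (auto simp: homog_def monoms_def)
qed

definition swap_xy :: "poly3 \<Rightarrow> poly3" where
  "swap_xy c = (\<lambda>(i, j, k). c (j, i, k))"

lemma swap_xy_apply [simp]: "swap_xy c (i, j, k) = c (j, i, k)"
  by (simp add: swap_xy_def)

lemma sum_swap_xy:
  assumes "\<And>i j k. (i, j, k) \<in> S \<longleftrightarrow> (j, i, k) \<in> T"
  shows "(\<Sum>q\<in>S. f q) = (\<Sum>(i, j, k)\<in>T. f (j, i, k))"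
  by (rule sum.reindex_bij_witness[of _ "\<lambda>(i, j, k). (j, i, k)" "\<lambda>(i, j, k). (j, i, k)"])
    (use assms in auto)

lemma hmult_ge_swap_xy:
  "hmult_ge (swap_xy c) n (x, y, z) m \<longleftrightarrow> hmult_ge c n (y, x, z) m"
proof -
  have "(\<Sum>(i,j,k)\<in>monoms n. swap_xy c (i,j,k) * df i a * df j b * df k e
          * x ^ (i - a) * y ^ (j - b) * z ^ (k - e))
      = (\<Sum>(i,j,k)\<in>monoms n. c (i,j,k) * df i b * df j a * df k e
          * y ^ (i - b) * x ^ (j - a) * z ^ (k - e))" for a b e
    by (subst sum_swap_xy[where T = "monoms n"]) (auto simp: monoms_def ac_simps)
  then show ?thesis
    unfolding hmult_ge_def by (auto simp: ac_simps)
qed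

lemma dmult_ge_swap_xy:
  "dmult_ge d (swap_xy c) (Ex1 a b) m \<longleftrightarrow> dmult_ge d c (Ex2 a b) m"
proof -
  have sets: "(i, j, k) \<in> {(i, j, k) \<in> monoms (3 * d). d \<le> j + k}
      \<longleftrightarrow> (j, i, k) \<in> {(i, j, k) \<in> monoms (3 * d). d \<le> i + k}" for i j k
    by (auto simp: monoms_def)
  show ?thesis
    by (simp add: Let_def bmult_ge_def sum_swap_xy[OF sets] case_prod_beta cong: if_cong)
qed

lemma section_L_swap_xy: "section_L d c \<Longrightarrow> section_L d (swap_xy c)"
  unfolding section_L_def homog_def
  by (auto simp: hmult_ge_swap_xy) (metis add.commute)

lemma sum_monoms_filter:
  "(\<Sum>q\<in>{(i, j, k). (i, j, k) \<in> monoms n \<and> P i j k}. f q)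
    = (\<Sum>(i, j, k)\<in>monoms n. if P i j k then f (i, j, k) else 0)"
proof -
  have "{(i, j, k). (i, j, k) \<in> monoms n \<and> P i j k} = {q \<in> monoms n. case q of (i, j, k) \<Rightarrow> P i j k}"
    by auto
  then show ?thesis
    by (auto simp: sum.inter_filter[OF finite_monoms] intro!: sum.cong)
qed

lemma section_L_nonzero:
  assumes "section_L d c"
  obtains q where "q \<in> monoms (3 * d)" and "c q \<noteq> 0"
  using assms by (force simp: section_L_def homog_def monoms_def)

lemma section_L_1_base_points:
  assumes "section_L 1 c"
  shows "c (3, 0, 0) = 0" and "c (0, 3, 0) = 0"
  using assms by (auto simp: section_L_def hmult_ge_def monoms_3 dest!: spec[of _ 0])

lemma section_L_not_dmult_ge_Pl:
  assumes "section_L d c" and "3 * d < m"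
  shows "\<not> dmult_ge d c (Pl x y z) m"
proof
  assume "dmult_ge d c (Pl x y z) m"
  then have "c q = 0" for q
    using assms homog_hmult_ge_above_degree by (auto simp: section_L_def)
  with assms(1) show False by (metis section_L_nonzero)
qed

lemma section_L_1_dmult_ge_Ex1:
  assumes sec: "section_L 1 c" and mult: "dmult_ge 1 c (Ex1 a b) 5"
  shows "a = 1 \<and> b = 0"
proof (cases "a = 1")
  case True
  from mult True have "bmult_ge c {(i,j,k). (i,j,k) \<in> monoms 3 \<and> 1 \<le> j + k} (\<lambda>(i,j,k). (j + k - 1, k)) b 5"
    by simp
  note B = this[unfolded bmult_ge_def sum_monoms_filter, rule_format]
  \<comment> \<open>In the chart u = s, v = s t the local equation is g0(t) + g1(t) s + g2(t) s^2 with
    deg g\<alpha> \<le> \<alpha> + 1, and B says that g\<alpha> vanishes to order 5 - \<alpha> at t = b.  Hence g0 = g1 = 0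
    and g2 = c(0,0,3) (t - b)^3, whose constant term c(0,3,0) vanishes because the cubic passes through P2.\<close>
  have g0: "c (2,1,0) + c (2,0,1) * b = 0" "c (2,0,1) = 0"
    using B[of 0 0] B[of 0 1] by (simp_all add: monoms_3)
  have g1: "c (1,2,0) + c (1,1,1) * b + c (1,0,2) * b^2 = 0" "c (1,1,1) + 2 * c (1,0,2) * b = 0"
      "c (1,0,2) = 0"
    using B[of 1 0] B[of 1 1] B[of 1 2] by (simp_all add: monoms_3 power2_eq_square algebra_simps)
  have g2: "c (0,3,0) + c (0,2,1) * b + c (0,1,2) * b^2 + c (0,0,3) * b^3 = 0"
    using B[of 2 0] by (simp add: monoms_3) algebra
  have g2': "c (0,2,1) + 2 * c (0,1,2) * b + 3 * c (0,0,3) * b^2 = 0"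
    using B[of 2 1] by (simp add: monoms_3) algebra
  have g2'': "c (0,1,2) + 3 * c (0,0,3) * b = 0"
    using B[of 2 2] by (simp add: monoms_3) algebra
  have base: "c (3,0,0) = 0" "c (0,3,0) = 0"
    using section_L_1_base_points[OF sec] by simp_all
  have "b = 0"
  proof (rule ccontr)
    assume "b \<noteq> 0"
    have "b ^ 3 * c (0,0,3) = 0"
      using g2 g2' g2'' base(2) by algebra
    with \<open>b \<noteq> 0\<close> have "c (0,0,3) = 0" by simp
    with g0 g1 g2 g2' g2'' base have "c q = 0" if "q \<in> monoms 3" for q
      using that by (auto simp: monoms_3)
    with sec show False by (metis section_L_nonzero mult_1_right)
  qed
  with True show ?thesis ..
next
  case False
  from mult False have "bmult_ge c {(i,j,k). (i,j,k) \<in> monoms 3 \<and> 1 \<le> j + k} (\<lambda>(i,j,k). (j + k - 1, j)) 0 5"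
    by simp
  note B = this[unfolded bmult_ge_def sum_monoms_filter, rule_format]
  \<comment> \<open>in the chart v = s, u = s t at t = 0, each monomial other than x^3 and y^3 contributes
    its own Taylor coefficient of order < 5\<close>
  have "c q = 0" if "q \<in> monoms 3" for q
    using that B[of 0 0] B[of 0 1] B[of 1 0] B[of 1 1] B[of 1 2] B[of 2 0] B[of 2 1] B[of 2 2]
      section_L_1_base_points[OF sec] by (auto simp: monoms_3)
  with sec show ?thesis by (metis section_L_nonzero mult_1_right)
qed

lemma section_L_1_dmult_ge_5:
  assumes "section_L 1 c" and "dmult_ge 1 c p 5"
  shows "p = Ex1 1 0 \<or> p = Ex2 1 0"
proof (cases p)
  case (Pl x y z)
  have "\<not> dmult_ge 1 c (Pl x y z) 5"
    by (rule section_L_not_dmult_ge_Pl[OF assms(1)]) simp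
  with assms(2) Pl show ?thesis by blast
next
  case (Ex1 a b)
  with section_L_1_dmult_ge_Ex1[OF assms(1)] assms(2) show ?thesis by blast
next
  case (Ex2 a b)
  with assms(2) have "dmult_ge 1 (swap_xy c) (Ex1 a b) 5"
    by (simp only: dmult_ge_swap_xy)
  with section_L_1_dmult_ge_Ex1[OF section_L_swap_xy[OF assms(1)]] Ex2 show ?thesis by blast
qed

lemma hmult_ge_z_divisible:
  assumes "\<And>i j k. c (i, j, k) \<noteq> 0 \<Longrightarrow> m \<le> k"
  shows "hmult_ge c n (x, y, 0) m"
  unfolding hmult_ge_def
proof (clarify, rule sum.neutral, clarify)
  fix a b e i j k
  assume "a + b + e < m"
  then have "c (i, j, k) = 0 \<or> 0 < k - e"
    using assms by fastforce
  then show "c (i, j, k) * df i a * df j b * df k e * x ^ (i - a) * y ^ (j - b) * 0 ^ (k - e) = 0"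
    by auto
qed

lemma section_L_z_divisible:
  assumes "homog c (3 * d)" and "c q \<noteq> 0" and "\<And>i j k. c (i, j, k) \<noteq> 0 \<Longrightarrow> d \<le> k"
  shows "section_L d c"
  unfolding section_L_def using assms by (blast intro: hmult_ge_z_divisible)

definition z_cube :: poly3 where
  "z_cube q = (if q = (0, 0, 3) then 1 else 0)"

lemma section_L_1_z_cube: "section_L 1 z_cube"
proof (rule section_L_z_divisible)
  show "homog z_cube (3 * 1)" by (simp add: homog_def z_cube_def)
  show "z_cube (0, 0, 3) \<noteq> 0" by (simp add: z_cube_def)
  show "1 \<le> k" if "z_cube (i, j, k) \<noteq> 0" for i j k
    using that by (simp add: z_cube_def split: if_splits)
qed

lemma dmult_ge_z_cube_Ex1: "dmult_ge 1 z_cube (Ex1 1 0) 5"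
proof -
  \<comment> \<open>the local equation of z^3 there is s^2 t^3\<close>
  have "(0::complex) ^ (2 - \<alpha>) * 0 ^ (3 - \<beta>) = 0" if "\<alpha> + \<beta> < 5" for \<alpha> \<beta> :: nat
    using that by (simp add: power_0_left)
  then show ?thesis
    by (simp only: dmult_ge.simps Let_def bmult_ge_def sum_monoms_filter) (simp add: monoms_3 z_cube_def)
qed

lemma dmult_ge_z_cube_Ex2: "dmult_ge 1 z_cube (Ex2 1 0) 5"
proof -
  have "swap_xy z_cube = z_cube"
    by (auto simp: swap_xy_def z_cube_def)
  then show ?thesis
    using dmult_ge_swap_xy[of 1 z_cube 1 0 5] dmult_ge_z_cube_Ex1 by simp
qed

lemma dmult_ge_mono: "dmult_ge d c p m \<Longrightarrow> k \<le> m \<Longrightarrow> dmult_ge d c p k"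
  by (cases p) (auto simp: hmult_ge_def bmult_ge_def Let_def)

lemma section_L_0_not_dmult_ge:
  assumes "section_L 0 c" and "0 < m"
  shows "\<not> dmult_ge 0 c p m"
proof
  assume mult: "dmult_ge 0 c p m"
  have monoms_0: "monoms 0 = {(0, 0, 0)}"
    by (auto simp: monoms_def)
  obtain q where "q \<in> monoms 0" "c q \<noteq> 0"
    using section_L_nonzero[of 0 c] assms(1) by auto
  then have "c (0, 0, 0) \<noteq> 0"
    by (simp add: monoms_0)
  then show False
    using mult assms(2)
    by (cases p) (auto simp: hmult_ge_def bmult_ge_def Let_def monoms_0 split: if_splits dest!: spec[of _ 0])
qed

lemma alpha_eq_1:
  assumes "Z \<noteq> {}" and "0 < m" and "section_L 1 c" and "\<forall>p\<in>Z. dmult_ge 1 c p m"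
  shows "alpha m Z = 1"
  unfolding alpha_def
proof (rule Least_equality)
  show "\<exists>c. section_L 1 c \<and> (\<forall>p\<in>Z. dmult_ge 1 c p m)"
    using assms(3,4) by blast
next
  fix d assume "\<exists>c. section_L d c \<and> (\<forall>p\<in>Z. dmult_ge d c p m)"
  then obtain c' where "section_L d c'" "\<forall>p\<in>Z. dmult_ge d c' p m" by blast
  moreover obtain p where "p \<in> Z" using assms(1) by blast
  ultimately show "1 \<le> d"
    using section_L_0_not_dmult_ge assms(2) by (cases d) auto
qed

lemma homogeneous_system_nontrivial_solution:
  fixes L :: "'i \<Rightarrow> 'u \<Rightarrow> 'a::field"
  assumes "finite I" and "finite U" and "card I < card U"
  shows "\<exists>x. (\<exists>u\<in>U. x u \<noteq> 0) \<and> (\<forall>u. u \<notin> U \<longrightarrow> x u = 0) \<and> (\<forall>i\<in>I. (\<Sum>u\<in>U. L i u * x u) = 0)"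
  using assms
proof (induction I arbitrary: U L rule: finite_induct)
  case empty
  then obtain u where "u \<in> U" by fastforce
  then show ?case
    by (intro exI[of _ "\<lambda>v. if v = u then 1 else 0"]) auto
next
  case (insert i I)
  show ?case
  proof (cases "\<forall>u\<in>U. L i u = 0")
    case True
    from insert.prems insert.hyps have "card I < card U" by simp
    with insert.IH[OF insert.prems(1)] obtain x where
      "\<exists>u\<in>U. x u \<noteq> 0" "\<forall>u. u \<notin> U \<longrightarrow> x u = 0" "\<forall>j\<in>I. (\<Sum>u\<in>U. L j u * x u) = 0"
      by blast
    with True show ?thesis by auto
  next
    case False
    then obtain u0 where u0: "u0 \<in> U" "L i u0 \<noteq> 0" by auto
    \<comment> \<open>Gaussian elimination: solve the i-th equation for x u0.\<close>
    define L' where "L' j v = L j v - L j u0 / L i u0 * L i v" for j v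
    from insert.prems insert.hyps u0 have "card I < card (U - {u0})" by simp
    with insert.IH[of "U - {u0}" L'] insert.prems obtain x' where x':
      "\<exists>u\<in>U - {u0}. x' u \<noteq> 0" "\<forall>u. u \<notin> U - {u0} \<longrightarrow> x' u = 0"
      "\<forall>j\<in>I. (\<Sum>u\<in>U - {u0}. L' j u * x' u) = 0"
      by auto
    define x where "x = x'(u0 := - (\<Sum>v\<in>U - {u0}. L i v * x' v) / L i u0)"
    have sum_x: "(\<Sum>u\<in>U. L j u * x u) = L j u0 * x u0 + (\<Sum>u\<in>U - {u0}. L j u * x' u)" for j
      using insert.prems(1) u0(1) by (simp add: sum.remove x_def)
    have "(\<Sum>u\<in>U. L j u * x u) = 0" if "j \<in> insert i I" for j
    proof (cases "j = i")
      case True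
      then show ?thesis using u0(2) unfolding sum_x by (simp add: x_def)
    next
      case False
      with that x'(3) have "(\<Sum>u\<in>U - {u0}. L' j u * x' u) = 0" by auto
      then show ?thesis
        using u0(2) unfolding sum_x
        by (simp add: x_def L'_def algebra_simps sum_subtractf sum_distrib_left sum_divide_distrib)
    qed
    moreover have "\<exists>u\<in>U. x u \<noteq> 0" "\<forall>u. u \<notin> U \<longrightarrow> x u = 0"
      using x'(1,2) u0(1) by (auto simp: x_def)
    ultimately show ?thesis by blast
  qed
qed

(* For c supported on multiples of z^d, the Taylor coefficient of order (a, b, e) of the local
   equation at p of the divisor of c is \<Sum>q. c q * mult_weight d p (a, b, e) q; at points of
   E1 and E2 only e = 0 occurs. *)
fun mult_weight :: "nat \<Rightarrow> s2pt \<Rightarrow> nat \<times> nat \<times> nat \<Rightarrow> nat \<times> nat \<times> nat \<Rightarrow> complex" where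
  "mult_weight d (Pl x y z) (a, b, e) = (\<lambda>(i, j, k).
     df i a * df j b * df k e * x ^ (i - a) * y ^ (j - b) * z ^ (k - e))"
| "mult_weight d (Ex1 a' t) (\<alpha>, \<beta>, _) = (\<lambda>(i, j, k).
     if a' = 1 then df (j + k - d) \<alpha> * df k \<beta> * 0 ^ (j + k - d - \<alpha>) * t ^ (k - \<beta>)
     else df (j + k - d) \<alpha> * df j \<beta> * 0 ^ (j + k - d - \<alpha>) * 0 ^ (j - \<beta>))"
| "mult_weight d (Ex2 a' t) (\<alpha>, \<beta>, _) = (\<lambda>(i, j, k).
     if a' = 1 then df (i + k - d) \<alpha> * df k \<beta> * 0 ^ (i + k - d - \<alpha>) * t ^ (k - \<beta>)
     else df (i + k - d) \<alpha> * df i \<beta> * 0 ^ (i + k - d - \<alpha>) * 0 ^ (i - \<beta>))"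

lemma dmult_ge_if_weights:
  assumes U: "U \<subseteq> {(i, j, k) \<in> monoms (3 * d). d \<le> k}"
    and supp: "\<forall>q. q \<notin> U \<longrightarrow> c q = 0"
    and weights: "\<And>a b e. a + b + e < m \<Longrightarrow> (\<Sum>q\<in>U. c q * mult_weight d p (a, b, e) q) = 0"
  shows "dmult_ge d c p m"
proof -
  have restrict: "(\<Sum>q\<in>S. c q * f q) = (\<Sum>q\<in>U. c q * f q)"
    if "finite S" "U \<subseteq> S" for S and f :: "nat \<times> nat \<times> nat \<Rightarrow> complex"
    using that supp by (intro sum.mono_neutral_right) auto
  have fin: "finite {(i, j, k) \<in> monoms (3 * d). P i j k}" for P
    by (rule finite_subset[OF _ finite_monoms]) auto
  have US: "U \<subseteq> {(i, j, k) \<in> monoms (3 * d). d \<le> j + k}" "U \<subseteq> {(i, j, k) \<in> monoms (3 * d). d \<le> i + k}"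
      "U \<subseteq> monoms (3 * d)"
    using U by auto
  show ?thesis
  proof (cases p)
    case (Pl x y z)
    then show ?thesis
      using weights by (auto simp: hmult_ge_def restrict[OF finite_monoms US(3)] mult.assoc case_prod_unfold)
  next
    case (Ex1 a' t)
    then show ?thesis
      using weights[of _ _ 0]
      by (simp only: Ex1 dmult_ge.simps Let_def bmult_ge_def mult.assoc restrict[OF fin US(1)])
        (auto simp: case_prod_unfold mult.assoc)
  next
    case (Ex2 a' t)
    then show ?thesis
      using weights[of _ _ 0]
      by (simp only: Ex2 dmult_ge.simps Let_def bmult_ge_def mult.assoc restrict[OF fin US(2)])
        (auto simp: case_prod_unfold mult.assoc)
  qed
qed

lemma exists_section_dmult_ge:
  assumes "finite Z"
  shows "\<exists>d c. section_L d c \<and> (\<forall>p\<in>Z. dmult_ge d c p m)"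
proof -
  \<comment> \<open>Search among z^d times binary forms of degree 2d: they vanish to order d at P1 and P2, and
    their 2d + 1 coefficients outnumber the card Z * m^3 linear conditions.\<close>
  define d where "d = card Z * m ^ 3 + 1"
  define U where "U = (\<lambda>i. (i, 2 * d - i, d)) ` {..2 * d}"
  define I where "I = Z \<times> {..<m} \<times> {..<m} \<times> {..<m}"
  have "inj_on (\<lambda>i. (i, 2 * d - i, d)) {..2 * d}"
    by (auto intro: inj_onI)
  then have "card U = 2 * d + 1"
    by (simp add: U_def card_image)
  moreover have "card I = card Z * m ^ 3"
    by (simp add: I_def card_cartesian_product power3_eq_cube)
  ultimately have "card I < card U"
    by (simp add: d_def)
  moreover have "finite I" "finite U"
    using assms by (simp_all add: I_def U_def)
  ultimately obtain c where c: "\<exists>u\<in>U. c u \<noteq> 0" "\<forall>u. u \<notin> U \<longrightarrow> c u = 0"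
      "\<forall>(p, abe)\<in>I. (\<Sum>u\<in>U. mult_weight d p abe u * c u) = 0"
    using homogeneous_system_nontrivial_solution[of I U "\<lambda>(p, abe). mult_weight d p abe"]
    by (auto simp: case_prod_unfold)
  have U: "U \<subseteq> {(i, j, k) \<in> monoms (3 * d). d \<le> k}"
    by (auto simp: U_def monoms_def)
  have "homog c (3 * d)" "\<And>i j k. c (i, j, k) \<noteq> 0 \<Longrightarrow> d \<le> k"
    using c(2) U by (auto simp: homog_def monoms_def)
  with c(1) have "section_L d c"
    by (blast intro: section_L_z_divisible)
  moreover have "dmult_ge d c p m" if "p \<in> Z" for p
    using U c(2)
  proof (rule dmult_ge_if_weights)
    fix a b e assume "a + b + e < m"
    then show "(\<Sum>q\<in>U. c q * mult_weight d p (a, b, e) q) = 0"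
      using c(3) \<open>p \<in> Z\<close> by (auto simp: I_def mult.commute)
  qed
  ultimately show ?thesis by blast
qed

lemma alpha_attained:
  assumes "finite Z"
  obtains c where "section_L (alpha m Z) c" and "\<forall>p\<in>Z. dmult_ge (alpha m Z) c p m"
  using LeastI_ex[OF exists_section_dmult_ge[OF assms]] unfolding alpha_def by blast

theorem theorem3:
  fixes Z :: "s2pt set"
  assumes "finite Z" and "Z \<noteq> {}" and "\<forall>p\<in>Z. valid_pt p"
  shows "Z \<subseteq> {Ex1 1 0, Ex2 1 0} \<longleftrightarrow>
    (alpha 1 Z = 1 \<and> alpha 2 Z = 1 \<and> alpha 3 Z = 1 \<and> alpha 4 Z = 1 \<and> alpha 5 Z = 1)"
proof
  assume "Z \<subseteq> {Ex1 1 0, Ex2 1 0}"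
  then have "\<forall>p\<in>Z. dmult_ge 1 z_cube p m" if "m \<le> 5" for m
    using dmult_ge_z_cube_Ex1 dmult_ge_z_cube_Ex2 dmult_ge_mono[OF _ that] by blast
  then show "alpha 1 Z = 1 \<and> alpha 2 Z = 1 \<and> alpha 3 Z = 1 \<and> alpha 4 Z = 1 \<and> alpha 5 Z = 1"
    using alpha_eq_1[OF assms(2) _ section_L_1_z_cube] by simp
next
  assume "alpha 1 Z = 1 \<and> alpha 2 Z = 1 \<and> alpha 3 Z = 1 \<and> alpha 4 Z = 1 \<and> alpha 5 Z = 1"
  then have "alpha 5 Z = 1" by simp
  with alpha_attained[OF assms(1), of 5] obtain c where "section_L 1 c" "\<forall>p\<in>Z. dmult_ge 1 c p 5"
    by auto
  then show "Z \<subseteq> {Ex1 1 0, Ex2 1 0}"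
    using section_L_1_dmult_ge_5 by blast
qed

end
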